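(* Let $\mathbf{A}\in\mathbb{R}^{m\times n}$ have all rows nonzero, let $b\in\mathcal{R}(\mathbf{A})$, and let $f:\mathbb{R}^n\to\mathbb{R}$ be finite everywhere and $1$-strongly convex. Let $\hat x$ be the unique solution of $\min_x f(x)$ subject to $\mathbf{A}x=b$. Fix a partition of the rows into $M$ blocks and $\alpha\in[0,1]$. Consider the block Bregman–Kaczmarz method (BK): $d^0=0\in\mathbb{R}^n$, $x^0=\nabla f^*(d^0)$, and for $k\ge 0$, choose a block index $i=i_k\in[M]$ at random, independently of the past, with probability $p_i=L_i^\alpha/\sum_{j=1}^M L_j^\alpha$, and set $$d^{k+1}=d^k-\frac{1}{\|\mathbf{A}_{(i)}\|_2^2}\mathbf{A}_{(i)}^\top\big(\mathbf{A}_{(i)}x^k-b_{(i)}\big),\qquad x^{k+1}=\nabla f^*(d^{k+1}).$$ Then for all $k\ge 0$, $$\tfrac12\mathbb{E}\big[\|x^k-\hat x\|_2^2\big]\le \mathbb{E}\big[D_f^{d^k}(x^k,\hat x)\big]\le \frac{2M\bar L_\alpha}{k+4}\,R_{1-\alpha}^2(y^0),$$ where $y^0=0\in\mathbb{R}^m$.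
   Context: Block notation: the index set $[m]$ is partitioned into $M$ consecutive blocks of sizes $m_1,\dots,m_M$ ($\sum_i m_i=m$); writing $\mathbf{I}_m=(\mathbf{U}_1,\dots,\mathbf{U}_M)$ with $\mathbf{U}_i\in\mathbb{R}^{m\times m_i}$, set $\mathbf{A}_{(i)}=\mathbf{U}_i^\top\mathbf{A}$ (the $i$-th row block), $b_{(i)}=\mathbf{U}_i^\top b$, $y_{(i)}=\mathbf{U}_i^\top y$. $L_i=\|\mathbf{A}_{(i)}\|_2^2$ (squared spectral norm), $\bar L_\alpha=\frac1M\sum_{j=1}^M L_j^\alpha$. $f^*$ is the Fenchel conjugate $f^*(x^* )=\sup_y\langle x^*,y\rangle-f(y)$ (differentiable with $1$-Lipschitz gradient). For $x^*\in\partial f(x)$, $D_f^{x^*}(x,y)=f(y)-f(x)-\langle x^*,y-x\rangle$ (Bregman distance). The dual function is $\Psi(y)=f^*(\mathbf{A}^\top y)-b^\top y$ on $\mathbb{R}^m$, with nonempty set of minimizers $\mathcal{Y}^*$. For $\beta\in[0,1]$, $\|y\|_\beta^2=\sum_{i=1}^M L_i^\beta\|y_{(i)}\|_2^2$ and $R_\beta(y^0)=\max_y\{\min_{\hat y\in\mathcal{Y}^*}\|y-\hat y\|_\beta:\ \Psi(y)\le\Psi(y^0)\}$. Expectations are over the random block indices. *)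

theory Defs
  imports "HOL-Analysis.Analysis"
begin

text \<open>The block structure is a map blk from rows to block indices 0..M-1.
 The i-th row block A_(i) is represented by the m x n matrix that keeps the rows
 of block i and zeroes all others (same spectral norm, same A_(i)^T(A_(i)x-b_(i))).\<close>

definition blockmat :: "real^'n^'m \<Rightarrow> ('m \<Rightarrow> nat) \<Rightarrow> nat \<Rightarrow> real^'n^'m" where
  "blockmat A blk i = (\<chi> r. if blk r = i then A $ r else 0)"

definition blockvec :: "real^'m \<Rightarrow> ('m \<Rightarrow> nat) \<Rightarrow> nat \<Rightarrow> real^'m" where
  "blockvec b blk i = (\<chi> r. if blk r = i then b $ r else 0)"

definition spec_norm :: "real^'n^'m \<Rightarrow> real" where
  "spec_norm B = onorm (\<lambda>x. B *v x)"

definition Lblk :: "real^'n^'m \<Rightarrow> ('m \<Rightarrow> nat) \<Rightarrow> nat \<Rightarrow> real" where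
  "Lblk A blk i = (spec_norm (blockmat A blk i))\<^sup>2"

definition Lbar :: "real^'n^'m \<Rightarrow> ('m \<Rightarrow> nat) \<Rightarrow> nat \<Rightarrow> real \<Rightarrow> real" where
  "Lbar A blk M \<alpha> = (1 / real M) * (\<Sum>j<M. Lblk A blk j powr \<alpha>)"

definition prob_blk :: "real^'n^'m \<Rightarrow> ('m \<Rightarrow> nat) \<Rightarrow> nat \<Rightarrow> real \<Rightarrow> nat \<Rightarrow> real" where
  "prob_blk A blk M \<alpha> i = Lblk A blk i powr \<alpha> / (\<Sum>j<M. Lblk A blk j powr \<alpha>)"

definition strongly_convex1 :: "(real^'n \<Rightarrow> real) \<Rightarrow> bool" where
  "strongly_convex1 f \<longleftrightarrow> (\<forall>x y t. 0 \<le> t \<and> t \<le> 1 \<longrightarrow>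
      f (t *\<^sub>R x + (1 - t) *\<^sub>R y) \<le> t * f x + (1 - t) * f y - t * (1 - t) / 2 * (norm (x - y))\<^sup>2)"

definition fconj :: "(real^'n \<Rightarrow> real) \<Rightarrow> real^'n \<Rightarrow> real" where
  "fconj f z = (SUP y. z \<bullet> y - f y)"

definition grad :: "(real^'n \<Rightarrow> real) \<Rightarrow> real^'n \<Rightarrow> real^'n" where
  "grad F d = (SOME g. (F has_derivative (\<lambda>h. g \<bullet> h)) (at d))"

definition bregman :: "(real^'n \<Rightarrow> real) \<Rightarrow> real^'n \<Rightarrow> real^'n \<Rightarrow> real^'n \<Rightarrow> real" where
  "bregman f xs x y = f y - f x - xs \<bullet> (y - x)"

definition bk_step :: "real^'n^'m \<Rightarrow> real^'m \<Rightarrow> ('m \<Rightarrow> nat) \<Rightarrow> (real^'n \<Rightarrow> real)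
    \<Rightarrow> real^'n \<Rightarrow> nat \<Rightarrow> real^'n" where
  "bk_step A b blk f d i =
     d - (1 / Lblk A blk i) *\<^sub>R (transpose (blockmat A blk i) *v
           (blockmat A blk i *v grad (fconj f) d - blockvec b blk i))"

definition bk_d :: "real^'n^'m \<Rightarrow> real^'m \<Rightarrow> ('m \<Rightarrow> nat) \<Rightarrow> (real^'n \<Rightarrow> real)
    \<Rightarrow> nat list \<Rightarrow> real^'n" where
  "bk_d A b blk f is = foldl (bk_step A b blk f) 0 is"

definition bk_x :: "real^'n^'m \<Rightarrow> real^'m \<Rightarrow> ('m \<Rightarrow> nat) \<Rightarrow> (real^'n \<Rightarrow> real)
    \<Rightarrow> nat list \<Rightarrow> real^'n" where
  "bk_x A b blk f is = grad (fconj f) (bk_d A b blk f is)"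

text \<open>Expectation of a function of the first k i.i.d. block indices, each drawn with
 probabilities p_i: a finite sum over all index sequences weighted by their probabilities.\<close>
definition expect_k :: "real^'n^'m \<Rightarrow> ('m \<Rightarrow> nat) \<Rightarrow> nat \<Rightarrow> real \<Rightarrow> nat
    \<Rightarrow> (nat list \<Rightarrow> real) \<Rightarrow> real" where
  "expect_k A blk M \<alpha> k g =
     (\<Sum>is\<in>{is. length is = k \<and> set is \<subseteq> {..<M}}.
        prod_list (map (prob_blk A blk M \<alpha>) is) * g is)"

definition Psi :: "real^'n^'m \<Rightarrow> real^'m \<Rightarrow> (real^'n \<Rightarrow> real) \<Rightarrow> real^'m \<Rightarrow> real" where
  "Psi A b f y = fconj f (transpose A *v y) - b \<bullet> y"

definition Ystar :: "real^'n^'m \<Rightarrow> real^'m \<Rightarrow> (real^'n \<Rightarrow> real) \<Rightarrow> (real^'m) set" where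
  "Ystar A b f = {y. \<forall>y'. Psi A b f y \<le> Psi A b f y'}"

definition bnorm :: "real^'n^'m \<Rightarrow> ('m \<Rightarrow> nat) \<Rightarrow> nat \<Rightarrow> real \<Rightarrow> real^'m \<Rightarrow> real" where
  "bnorm A blk M \<beta> y = sqrt (\<Sum>i<M. Lblk A blk i powr \<beta> * (\<Sum>r\<in>{r. blk r = i}. (y $ r)\<^sup>2))"

definition Rbeta :: "real^'n^'m \<Rightarrow> real^'m \<Rightarrow> (real^'n \<Rightarrow> real) \<Rightarrow> ('m \<Rightarrow> nat) \<Rightarrow> nat
    \<Rightarrow> real \<Rightarrow> real^'m \<Rightarrow> real" where
  "Rbeta A b f blk M \<beta> y0 =
     (SUP y\<in>{y. Psi A b f y \<le> Psi A b f y0}.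
        (INF yh\<in>Ystar A b f. bnorm A blk M \<beta> (y - yh)))"

end

(* With y^k the dual iterates (d^k = A^T y^k), BK is randomized block coordinate descent with
   steps 1/L_i on the dual function Psi(y) = f*(A^T y) - <b, y>. Because the gradient of f* is
   1-Lipschitz, one step on block i lowers Psi by the squared block residual over 2 L_i, so Psi
   decreases in expectation by G(y)^2 / (2 sum_j L_j^alpha), where G is the residual in the
   dual weighted norm. Convexity bounds the dual gap Psi(y) - min Psi by G(y) times the
   (1-alpha)-distance from y to the dual solutions, which is at most R on the level set of y^0.
   By Jensen the expected gap e_k satisfies e_k^2 <= c (e_k - e_(k+1)) with
   c = 2 M Lbar R^2, and e_0 <= c/4, hence e_k <= c/(k+4). By strong duality the Bregman
   distance D(x^k, xhat) is exactly the dual gap at y^k, and strong convexity makes it at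
   least |x^k - xhat|^2 / 2. *)

theory Submission
  imports Defs
begin

declare transpose_matrix_vector [simp del]

section \<open>Conjugates of strongly convex functions\<close>

lemma strongly_convex1_imp_convex_on:
  fixes f :: "real^'n \<Rightarrow> real"
  assumes "strongly_convex1 f"
  shows "convex_on UNIV f"
  unfolding convex_on_def
proof (intro conjI allI impI ballI)
  fix x y :: "real^'n" and u v :: real
  assume uv: "0 \<le> u" "0 \<le> v" "u + v = 1"
  then have "f (u *\<^sub>R x + v *\<^sub>R y) \<le> u * f x + v * f y - u * v / 2 * (norm (x - y))\<^sup>2"
    using assms unfolding strongly_convex1_def by (metis add_diff_cancel_left' le_add_same_cancel1)
  moreover have "0 \<le> u * v / 2 * (norm (x - y))\<^sup>2"
    using uv by simp
  ultimately show "f (u *\<^sub>R x + v *\<^sub>R y) \<le> u * f x + v * f y"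
    by linarith
qed simp

lemma strongly_convex1_continuous_on:
  "strongly_convex1 f \<Longrightarrow> continuous_on UNIV f"
  by (rule convex_on_continuous[OF open_UNIV strongly_convex1_imp_convex_on])

lemma strongly_convex1_bounded_cball:
  fixes f :: "real^'n \<Rightarrow> real"
  assumes "strongly_convex1 f"
  obtains K where "\<And>y. y \<in> cball c 1 \<Longrightarrow> \<bar>f y\<bar> \<le> K"
proof -
  have "compact (f ` cball c 1)"
    using strongly_convex1_continuous_on[OF assms]
    by (intro compact_continuous_image) (auto intro: continuous_on_subset)
  then show ?thesis
    using that compact_imp_bounded bounded_iff by (metis image_eqI real_norm_def)
qed

lemma strongly_convex1_growth_outside_unit_ball:
  fixes f :: "real^'n \<Rightarrow> real"
  assumes sc: "strongly_convex1 f" and K: "\<And>y. norm y \<le> 1 \<Longrightarrow> \<bar>f y\<bar> \<le> K"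
    and y: "1 < norm y"
  shows "(norm y)\<^sup>2 / 2 - norm y / 2 - 2 * (K * norm y) \<le> f y"
proof -
  define r where "r = norm y"
  define t where "t = 1 / r"
  have r1: "1 < r" using y by (simp add: r_def)
  then have t01: "0 \<le> t" "t \<le> 1" by (simp_all add: t_def)
  have K0: "0 \<le> K" using K[of 0] by simp
  have "f (t *\<^sub>R y + (1 - t) *\<^sub>R 0) \<le> t * f y + (1 - t) * f 0 - t * (1 - t) / 2 * r\<^sup>2"
    using sc t01 unfolding strongly_convex1_def r_def by (metis diff_zero)
  moreover have "norm (t *\<^sub>R y) \<le> 1"
    using r1 by (simp add: t_def r_def)
  then have "- K \<le> f (t *\<^sub>R y)"
    using K[of "t *\<^sub>R y"] by linarith
  moreover have "(1 - t) * f 0 \<le> (1 - t) * K"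
    using K[of 0] t01 by (intro mult_left_mono) auto
  moreover have "(1 - t) * K \<le> K"
    using t01 K0 by (simp add: mult_left_le_one_le)
  ultimately have "r * (t * (1 - t) / 2 * r\<^sup>2 - 2 * K) \<le> r * (t * f y)"
    using r1 by (intro mult_left_mono) auto
  moreover have "r * (t * f y) = f y"
    using r1 by (simp add: t_def)
  moreover have "r * (t * (1 - t) / 2 * r\<^sup>2 - 2 * K) = r\<^sup>2 / 2 - r / 2 - 2 * (K * r)"
    using r1 by (simp add: t_def field_simps power2_eq_square)
  ultimately show ?thesis
    unfolding r_def by linarith
qed

lemma strongly_convex1_quadratic_growth:
  fixes f :: "real^'n \<Rightarrow> real"
  assumes sc: "strongly_convex1 f"
  obtains C where "0 \<le> C" and "\<And>y. (norm y)\<^sup>2 / 2 - C * (norm y + 1) \<le> f y"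
proof -
  obtain K where K: "\<And>y. norm y \<le> 1 \<Longrightarrow> \<bar>f y\<bar> \<le> K"
    using strongly_convex1_bounded_cball[OF sc, of 0] by (metis dist_0_norm mem_cball)
  have K0: "0 \<le> K" using K[of 0] by simp
  have "(norm y)\<^sup>2 / 2 - (2 * K + 1) * (norm y + 1) \<le> f y" for y
  proof -
    have "(2 * K + 1) * (norm y + 1) = 2 * (K * norm y) + 2 * K + norm y + 1"
      by (simp add: algebra_simps)
    moreover have "0 \<le> K * norm y" using K0 by simp
    moreover have "(norm y)\<^sup>2 / 2 - norm y / 2 - 2 * (K * norm y) \<le> f y \<or>
        ((norm y)\<^sup>2 / 2 \<le> 1 \<and> - K \<le> f y)"
    proof (cases "1 < norm y")
      case True
      then show ?thesis using strongly_convex1_growth_outside_unit_ball[OF sc K] by blast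
    next
      case False
      then show ?thesis using K[of y] power_le_one[of "norm y" 2] by auto
    qed
    ultimately show ?thesis using K0 norm_ge_zero[of y] by linarith
  qed
  then show ?thesis using K0 that[of "2 * K + 1"] by simp
qed

definition is_fconj_argmax :: "(real^'n \<Rightarrow> real) \<Rightarrow> real^'n \<Rightarrow> real^'n \<Rightarrow> bool" where
  "is_fconj_argmax f z X \<longleftrightarrow> (\<forall>y. z \<bullet> y - f y \<le> z \<bullet> X - f X)"

lemma fconj_argmax_exists:
  fixes f :: "real^'n \<Rightarrow> real"
  assumes sc: "strongly_convex1 f"
  obtains X where "is_fconj_argmax f z X"
proof -
  obtain C where C0: "0 \<le> C" and C: "\<And>y. (norm y)\<^sup>2 / 2 - C * (norm y + 1) \<le> f y"
    using strongly_convex1_quadratic_growth[OF sc] by blast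
  define a where "a = norm z + C"
  define \<rho> where "\<rho> = 2 * norm z + 4 * C + 2 * \<bar>f 0\<bar> + 2"
  have "continuous_on (cball 0 \<rho>) (\<lambda>y. z \<bullet> y - f y)"
    using strongly_convex1_continuous_on[OF sc]
    by (intro continuous_intros) (auto intro: continuous_on_subset)
  moreover have "0 \<le> \<rho>" using C0 by (simp add: \<rho>_def)
  ultimately obtain X where "X \<in> cball 0 \<rho>" and X: "\<And>y. y \<in> cball 0 \<rho> \<Longrightarrow> z \<bullet> y - f y \<le> z \<bullet> X - f X"
    using continuous_attains_sup[of "cball 0 \<rho>" "\<lambda>y. z \<bullet> y - f y"] by fastforce
  have "z \<bullet> y - f y \<le> z \<bullet> X - f X" for y
  proof (cases "y \<in> cball 0 \<rho>")
    case True
    then show ?thesis by (rule X)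
  next
    case False
    define r where "r = norm y"
    have r: "\<rho> < r" using False by (simp add: r_def)
    have "z \<bullet> y \<le> norm z * r" unfolding r_def by (rule norm_cauchy_schwarz)
    moreover have "norm z * r + C * (r + 1) = a * r + C"
      by (simp add: a_def algebra_simps)
    \<comment> \<open>Beyond the ball the concave quadratic bound is below the value at the origin.\<close>
    moreover have "a * r + C - r\<^sup>2 / 2 < - \<bar>f 0\<bar>"
    proof -
      have "1 \<le> r"
        using r C0 norm_ge_zero[of z] abs_ge_zero[of "f 0"] unfolding \<rho>_def by linarith
      moreover have "C + \<bar>f 0\<bar> + 1 \<le> r / 2 - a"
        using r unfolding \<rho>_def a_def by linarith
      ultimately have "1 * (C + \<bar>f 0\<bar> + 1) \<le> r * (r / 2 - a)"
        using C0 by (intro mult_mono) auto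
      then show ?thesis by (simp add: power2_eq_square algebra_simps)
    qed
    moreover have "z \<bullet> 0 - f 0 \<le> z \<bullet> X - f X"
      using X[of 0] \<open>0 \<le> \<rho>\<close> by simp
    ultimately show ?thesis
      using C[of y] unfolding r_def[symmetric] by (smt (verit) inner_zero_right)
  qed
  then show ?thesis using that unfolding is_fconj_argmax_def by blast
qed

lemma fconj_argmax_quadratic_gap:
  fixes f :: "real^'n \<Rightarrow> real"
  assumes sc: "strongly_convex1 f" and X: "is_fconj_argmax f z X"
  shows "f X + z \<bullet> (y - X) + (norm (y - X))\<^sup>2 / 2 \<le> f y"
proof -
  define g where "g w = f w - z \<bullet> w" for w
  define d where "d = (norm (y - X))\<^sup>2"
  have g_min: "g X \<le> g w" for w
    using X unfolding is_fconj_argmax_def g_def by (smt (verit))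
  have gap: "(1 - t) / 2 * d \<le> g y - g X" if t: "0 < t" "t \<le> 1" for t
  proof -
    have "f (t *\<^sub>R y + (1 - t) *\<^sub>R X) \<le> t * f y + (1 - t) * f X - t * (1 - t) / 2 * d"
      using sc t unfolding strongly_convex1_def d_def by auto
    moreover have "z \<bullet> (t *\<^sub>R y + (1 - t) *\<^sub>R X) = t * (z \<bullet> y) + (1 - t) * (z \<bullet> X)"
      by (simp add: inner_add_right)
    ultimately have "g (t *\<^sub>R y + (1 - t) *\<^sub>R X) \<le> t * g y + (1 - t) * g X - t * (1 - t) / 2 * d"
      by (simp add: g_def algebra_simps)
    with g_min[of "t *\<^sub>R y + (1 - t) *\<^sub>R X"] have "t * ((1 - t) / 2 * d) \<le> t * (g y - g X)"
      by (simp add: algebra_simps)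
    then show ?thesis using t by simp
  qed
  \<comment> \<open>Let the step t tend to 0.\<close>
  have "d / 2 \<le> g y - g X"
  proof (rule field_le_epsilon)
    fix e :: real assume "0 < e"
    define t where "t = min 1 (e / (d + 1))"
    have d0: "0 \<le> d" by (simp add: d_def)
    then have t: "0 < t" "t \<le> 1" using \<open>0 < e\<close> by (auto simp: t_def)
    have "t * d \<le> e / (d + 1) * d" using d0 unfolding t_def by (intro mult_right_mono) auto
    also have "\<dots> \<le> e" using \<open>0 < e\<close> d0 by (simp add: field_simps)
    finally have "t * d \<le> e" .
    moreover have "(1 - t) / 2 * d = d / 2 - t * d / 2" by (simp add: field_simps)
    ultimately show "d / 2 \<le> g y - g X + e"
      using gap[OF t] \<open>0 < e\<close> by linarith
  qed
  then show ?thesis by (simp add: g_def d_def inner_diff_right)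
qed

lemma fconj_eq_argmax:
  "is_fconj_argmax f z X \<Longrightarrow> fconj f z = z \<bullet> X - f X"
  unfolding fconj_def is_fconj_argmax_def by (rule cSup_eq_maximum) auto

lemma fenchel_young:
  fixes f :: "real^'n \<Rightarrow> real"
  assumes "strongly_convex1 f"
  shows "z \<bullet> y - f y \<le> fconj f z"
proof -
  obtain X where "is_fconj_argmax f z X" using fconj_argmax_exists[OF assms] .
  then show ?thesis using fconj_eq_argmax[of f z X] by (simp add: is_fconj_argmax_def)
qed

lemma fconj_ge_linearization:
  fixes f :: "real^'n \<Rightarrow> real"
  assumes "strongly_convex1 f" and "is_fconj_argmax f z X"
  shows "fconj f z + (z' - z) \<bullet> X \<le> fconj f z'"
  using fenchel_young[OF assms(1), of z' X] fconj_eq_argmax[OF assms(2)]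
  by (simp add: inner_diff_left)

lemma fconj_le_quadratic:
  fixes f :: "real^'n \<Rightarrow> real"
  assumes sc: "strongly_convex1 f" and X: "is_fconj_argmax f z X"
  shows "fconj f z' \<le> fconj f z + (z' - z) \<bullet> X + (norm (z' - z))\<^sup>2 / 2"
proof -
  obtain X' where X': "is_fconj_argmax f z' X'" using fconj_argmax_exists[OF sc] .
  have "(z' - z) \<bullet> (X' - X) \<le> norm (z' - z) * norm (X' - X)"
    by (rule norm_cauchy_schwarz)
  also have "\<dots> \<le> (norm (z' - z))\<^sup>2 / 2 + (norm (X' - X))\<^sup>2 / 2"
    using sum_squares_bound[of "norm (z' - z)" "norm (X' - X)"] by (simp add: power2_eq_square)
  finally have "(z' - z) \<bullet> (X' - X) - (norm (X' - X))\<^sup>2 / 2 \<le> (norm (z' - z))\<^sup>2 / 2"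
    by simp
  moreover have "f X + z \<bullet> (X' - X) + (norm (X' - X))\<^sup>2 / 2 \<le> f X'"
    by (rule fconj_argmax_quadratic_gap[OF sc X])
  moreover have "z' \<bullet> X' = z \<bullet> X + (z' - z) \<bullet> X + z \<bullet> (X' - X) + (z' - z) \<bullet> (X' - X)"
    by (simp add: inner_diff_left inner_diff_right)
  ultimately show ?thesis
    unfolding fconj_eq_argmax[OF X] fconj_eq_argmax[OF X'] by linarith
qed

lemma fconj_has_derivative:
  fixes f :: "real^'n \<Rightarrow> real"
  assumes sc: "strongly_convex1 f" and X: "is_fconj_argmax f z X"
  shows "(fconj f has_derivative (\<lambda>h. X \<bullet> h)) (at z)"
  unfolding has_derivative_at'
proof (intro conjI allI impI)
  fix e :: real assume e: "0 < e"
  show "\<exists>d>0. \<forall>z'. 0 < norm (z' - z) \<and> norm (z' - z) < d \<longrightarrow>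
        norm (fconj f z' - fconj f z - X \<bullet> (z' - z)) / norm (z' - z) < e"
  proof (intro exI[of _ "2 * e"] conjI allI impI)
    fix z' assume z': "0 < norm (z' - z) \<and> norm (z' - z) < 2 * e"
    have "0 \<le> fconj f z' - fconj f z - X \<bullet> (z' - z)"
      using fconj_ge_linearization[OF sc X, of z'] by (simp add: inner_commute)
    moreover have "fconj f z' - fconj f z - X \<bullet> (z' - z) \<le> (norm (z' - z))\<^sup>2 / 2"
      using fconj_le_quadratic[OF sc X, of z'] by (simp add: inner_commute)
    ultimately have "norm (fconj f z' - fconj f z - X \<bullet> (z' - z)) / norm (z' - z)
        \<le> (norm (z' - z))\<^sup>2 / 2 / norm (z' - z)"
      using z' by (intro divide_right_mono) auto
    also have "\<dots> < e" using z' by (simp add: power2_eq_square)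
    finally show "norm (fconj f z' - fconj f z - X \<bullet> (z' - z)) / norm (z' - z) < e" .
  qed (use e in simp)
qed (rule bounded_linear_inner_right)

lemma grad_fconj_eq_argmax:
  fixes f :: "real^'n \<Rightarrow> real"
  assumes sc: "strongly_convex1 f" and X: "is_fconj_argmax f z X"
  shows "grad (fconj f) z = X"
proof -
  have D: "(fconj f has_derivative (\<lambda>h. X \<bullet> h)) (at z)"
    by (rule fconj_has_derivative[OF sc X])
  then have "(fconj f has_derivative (\<lambda>h. grad (fconj f) z \<bullet> h)) (at z)"
    unfolding grad_def by (rule someI)
  from has_derivative_unique[OF this D] have "(\<lambda>h. grad (fconj f) z \<bullet> h) = (\<lambda>h. X \<bullet> h)" .
  then have "(grad (fconj f) z - X) \<bullet> (grad (fconj f) z - X) = 0"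
    by (metis inner_diff_left diff_self)
  then show ?thesis by simp
qed

lemma grad_fconj_is_argmax:
  fixes f :: "real^'n \<Rightarrow> real"
  assumes sc: "strongly_convex1 f"
  shows "is_fconj_argmax f z (grad (fconj f) z)"
proof -
  obtain X where "is_fconj_argmax f z X" using fconj_argmax_exists[OF sc] .
  with grad_fconj_eq_argmax[OF sc this] show ?thesis by simp
qed

lemma bregman_grad_fconj_ge_half_sq:
  fixes f :: "real^'n \<Rightarrow> real"
  assumes "strongly_convex1 f"
  shows "(norm (grad (fconj f) d - x))\<^sup>2 / 2 \<le> bregman f d (grad (fconj f) d) x"
  using fconj_argmax_quadratic_gap[OF assms grad_fconj_is_argmax[OF assms], of d x]
  by (simp add: bregman_def norm_minus_commute)

section \<open>Elementary inequalities\<close>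

lemma sum_mult_le_sqrt_sum_squares:
  fixes a c :: "'a \<Rightarrow> real"
  shows "(\<Sum>i\<in>I. a i * c i) \<le> sqrt (\<Sum>i\<in>I. (a i)\<^sup>2) * sqrt (\<Sum>i\<in>I. (c i)\<^sup>2)"
proof -
  have "(\<Sum>i\<in>I. a i * c i) \<le> sqrt ((\<Sum>i\<in>I. a i * c i)\<^sup>2)"
    by simp
  also have "\<dots> \<le> sqrt ((\<Sum>i\<in>I. (a i)\<^sup>2) * (\<Sum>i\<in>I. (c i)\<^sup>2))"
    by (rule real_sqrt_le_mono[OF Cauchy_Schwarz_ineq_sum])
  finally show ?thesis by (simp add: real_sqrt_mult)
qed

lemma weighted_mean_sq_le:
  fixes w a :: "'a \<Rightarrow> real"
  assumes "\<And>x. x \<in> T \<Longrightarrow> 0 \<le> w x" and "(\<Sum>x\<in>T. w x) = 1"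
  shows "(\<Sum>x\<in>T. w x * a x)\<^sup>2 \<le> (\<Sum>x\<in>T. w x * (a x)\<^sup>2)"
proof -
  define m where "m = (\<Sum>x\<in>T. w x * a x)"
  have "0 \<le> (\<Sum>x\<in>T. w x * (a x - m)\<^sup>2)"
    using assms by (intro sum_nonneg) auto
  also have "\<dots> = (\<Sum>x\<in>T. w x * (a x)\<^sup>2) - 2 * m * (\<Sum>x\<in>T. w x * a x) + m\<^sup>2 * (\<Sum>x\<in>T. w x)"
    by (simp add: power2_eq_square algebra_simps sum.distrib sum_subtractf sum_distrib_left
        sum_distrib_right)
  also have "\<dots> = (\<Sum>x\<in>T. w x * (a x)\<^sup>2) - m\<^sup>2"
    using assms(2) by (simp add: m_def power2_eq_square)
  finally show ?thesis by (simp add: m_def)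
qed

lemma rate_of_quadratic_decrease:
  fixes e :: "nat \<Rightarrow> real"
  assumes c: "0 \<le> c" and nonneg: "\<And>k. 0 \<le> e k"
    and decrease: "\<And>k. (e k)\<^sup>2 \<le> c * (e k - e (Suc k))" and start: "e 0 \<le> c / 4"
  shows "e k \<le> c / (real k + 4)"
proof (induction k)
  case 0
  then show ?case using start by simp
next
  case (Suc k)
  define q where "q = real k + 4"
  have q: "4 \<le> q" and ek: "e k \<le> c / q" using Suc by (simp_all add: q_def)
  show ?case
  proof (cases "c = 0")
    case True
    then show ?thesis using decrease[of "Suc k"] by simp
  next
    case False
    then have c0: "0 < c" using c by simp
    have "e (Suc k) \<le> e k - (e k)\<^sup>2 / c"
      using decrease[of k] c0 by (simp add: field_simps)
    \<comment> \<open>t - t^2/c is increasing for t \<le> c/2, and e k \<le> c/q \<le> c/4.\<close>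
    also have "\<dots> \<le> c / q - (c / q)\<^sup>2 / c"
    proof -
      have "c / q \<le> c / 4" using q c0 by (intro divide_left_mono) auto
      then have "e k + c / q \<le> c" using ek c0 by linarith
      then have "0 \<le> (c / q - e k) * (1 - (e k + c / q) / c)"
        using ek c0 by (intro mult_nonneg_nonneg) auto
      also have "\<dots> = (c / q - (c / q)\<^sup>2 / c) - (e k - (e k)\<^sup>2 / c)"
        using c0 q by (simp add: field_simps power2_eq_square)
      finally show ?thesis by simp
    qed
    also have "\<dots> = c * (q - 1) / q\<^sup>2"
      using c0 q by (simp add: field_simps power2_eq_square)
    also have "\<dots> \<le> c / (q + 1)"
      using c0 q by (simp add: field_simps power2_eq_square)
    finally show ?thesis by (simp add: q_def add_ac)
  qed
qed

section \<open>Spectral norms and row blocks\<close>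

lemma spec_norm_nonneg: "0 \<le> spec_norm B"
  unfolding spec_norm_def by (intro onorm_pos_le) auto

lemma norm_mult_vec_le_spec_norm: "norm (B *v x) \<le> spec_norm B * norm x"
  unfolding spec_norm_def by (intro onorm) auto

lemma inner_transpose_mult_vec:
  fixes B :: "real^'n^'m"
  shows "(transpose B *v v) \<bullet> x = v \<bullet> (B *v x)"
  by (simp add: transpose_matrix_vector dot_lmul_matrix)

lemma norm_transpose_mult_vec_le_spec_norm:
  "norm (transpose B *v v) \<le> spec_norm B * norm v"
proof -
  define w where "w = transpose B *v v"
  have "norm w * norm w = v \<bullet> (B *v w)"
    by (simp add: w_def[symmetric] inner_transpose_mult_vec[symmetric] power2_norm_eq_inner[symmetric]
        power2_eq_square)
  also have "\<dots> \<le> norm v * norm (B *v w)" by (rule norm_cauchy_schwarz)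
  also have "\<dots> \<le> norm v * (spec_norm B * norm w)"
    by (intro mult_left_mono norm_mult_vec_le_spec_norm) auto
  finally have "norm w * norm w \<le> norm w * (spec_norm B * norm v)"
    by (simp add: algebra_simps)
  then show ?thesis
    using spec_norm_nonneg[of B] by (cases "norm w = 0") (auto simp: w_def)
qed

lemma blockmat_mult_vec: "blockmat A blk i *v x = blockvec (A *v x) blk i"
  by (simp add: vec_eq_iff blockmat_def blockvec_def matrix_vector_mult_def)

lemma transpose_blockmat_mult_vec:
  "transpose (blockmat A blk i) *v v = transpose A *v blockvec v blk i"
  by (simp add: vec_eq_iff blockmat_def blockvec_def transpose_matrix_vector vector_matrix_mult_def)
    (intro allI sum.cong, auto)

lemma blockvec_diff: "blockvec (u - w) blk i = blockvec u blk i - blockvec w blk i"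
  by (simp add: vec_eq_iff blockvec_def)

lemma blockvec_scaleR: "blockvec (c *\<^sub>R v) blk i = c *\<^sub>R blockvec v blk i"
  by (simp add: vec_eq_iff blockvec_def)

lemma blockvec_blockvec [simp]: "blockvec (blockvec v blk i) blk i = blockvec v blk i"
  by (simp add: vec_eq_iff blockvec_def)

lemma inner_blockvec: "blockvec u blk i \<bullet> w = (\<Sum>r\<in>{r. blk r = i}. u $ r * w $ r)"
proof -
  have "blockvec u blk i \<bullet> w = (\<Sum>r\<in>UNIV. if blk r = i then u $ r * w $ r else 0)"
    by (auto simp: inner_vec_def blockvec_def intro!: sum.cong)
  then show ?thesis by (simp add: sum.If_cases)
qed

lemma inner_blockvec_blockvec: "blockvec u blk i \<bullet> w = blockvec u blk i \<bullet> blockvec w blk i"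
  unfolding inner_blockvec by (rule sum.cong) (auto simp: blockvec_def)

lemma norm_blockvec_sq: "(norm (blockvec v blk i))\<^sup>2 = (\<Sum>r\<in>{r. blk r = i}. (v $ r)\<^sup>2)"
  unfolding power2_norm_eq_inner inner_blockvec
  by (rule sum.cong) (auto simp: blockvec_def power2_eq_square)

lemma norm_blockvec_le: "norm (blockvec v blk i) \<le> norm v"
proof -
  have "(norm (blockvec v blk i))\<^sup>2 = blockvec v blk i \<bullet> v"
    by (simp add: inner_blockvec_blockvec[of v blk i v] power2_norm_eq_inner)
  also have "\<dots> \<le> norm (blockvec v blk i) * norm v" by (rule norm_cauchy_schwarz)
  finally show ?thesis
    by (cases "norm (blockvec v blk i) = 0") (auto simp: power2_eq_square)
qed

lemma sum_blockvec:
  assumes "\<forall>r. blk r < M"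
  shows "(\<Sum>i<M. blockvec v blk i) = v"
proof -
  have "(\<Sum>i<M. blockvec v blk i) $ r = v $ r" for r
    using assms by (simp add: sum_component blockvec_def sum.delta)
  then show ?thesis by (simp add: vec_eq_iff)
qed

lemma inner_eq_sum_blockvec:
  assumes "\<forall>r. blk r < M"
  shows "u \<bullet> w = (\<Sum>i<M. blockvec u blk i \<bullet> blockvec w blk i)"
proof -
  have "blockvec u blk i \<bullet> blockvec w blk i = (\<Sum>r\<in>{r \<in> UNIV. blk r = i}. u $ r * w $ r)" for i
    unfolding inner_blockvec by (rule sum.cong) (auto simp: blockvec_def)
  then have "(\<Sum>i<M. blockvec u blk i \<bullet> blockvec w blk i) = (\<Sum>i<M. \<Sum>r\<in>{r \<in> UNIV. blk r = i}. u $ r * w $ r)"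
    by simp
  also have "\<dots> = (\<Sum>r\<in>UNIV. u $ r * w $ r)"
    by (rule sum.group) (use assms in auto)
  finally show ?thesis by (simp add: inner_vec_def)
qed

lemma bnorm_eq:
  "bnorm A blk M \<beta> w = sqrt (\<Sum>i<M. Lblk A blk i powr \<beta> * (norm (blockvec w blk i))\<^sup>2)"
  unfolding bnorm_def norm_blockvec_sq ..

lemma bnorm_nonneg: "0 \<le> bnorm A blk M \<beta> w"
  unfolding bnorm_def by (intro real_sqrt_ge_zero sum_nonneg mult_nonneg_nonneg sum_nonneg) auto

lemma bnorm_le_norm:
  "bnorm A blk M \<beta> w \<le> sqrt (\<Sum>i<M. Lblk A blk i powr \<beta>) * norm w"
proof -
  have "(\<Sum>i<M. Lblk A blk i powr \<beta> * (norm (blockvec w blk i))\<^sup>2)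
      \<le> (\<Sum>i<M. Lblk A blk i powr \<beta> * (norm w)\<^sup>2)"
    by (intro sum_mono mult_left_mono power_mono norm_blockvec_le) auto
  then have "bnorm A blk M \<beta> w \<le> sqrt ((\<Sum>i<M. Lblk A blk i powr \<beta>) * (norm w)\<^sup>2)"
    unfolding bnorm_eq sum_distrib_right by (rule real_sqrt_le_mono)
  then show ?thesis by (simp add: real_sqrt_mult)
qed

lemma norm_transpose_mult_blockvec_le:
  "norm (transpose A *v blockvec w blk i) \<le> sqrt (Lblk A blk i) * norm (blockvec w blk i)"
  using norm_transpose_mult_vec_le_spec_norm[of "blockmat A blk i" "blockvec w blk i"]
  by (simp add: transpose_blockmat_mult_vec Lblk_def spec_norm_nonneg)

lemma norm_transpose_mult_le_bnorm:
  assumes "\<forall>r. blk r < M"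
  shows "norm (transpose A *v w)
    \<le> sqrt (\<Sum>i<M. Lblk A blk i powr \<alpha>) * bnorm A blk M (1 - \<alpha>) w"
proof -
  let ?L = "Lblk A blk"
  have "transpose A *v w = transpose A *v (\<Sum>i<M. blockvec w blk i)"
    by (simp only: sum_blockvec[OF assms])
  also have "\<dots> = (\<Sum>i<M. transpose A *v blockvec w blk i)"
    using linear_sum[OF matrix_vector_mul_linear, of "transpose A" "\<lambda>i. blockvec w blk i" "{..<M}"]
    by (simp add: o_def)
  finally have "norm (transpose A *v w) \<le> (\<Sum>i<M. norm (transpose A *v blockvec w blk i))"
    by (simp add: norm_sum)
  also have "\<dots> \<le> (\<Sum>i<M. sqrt (?L i) * norm (blockvec w blk i))"
    by (intro sum_mono norm_transpose_mult_blockvec_le)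
  also have "\<dots> = (\<Sum>i<M. sqrt (?L i powr \<alpha>) * (sqrt (?L i powr (1 - \<alpha>)) * norm (blockvec w blk i)))"
  proof -
    have "sqrt (?L i) = sqrt (?L i powr \<alpha>) * sqrt (?L i powr (1 - \<alpha>))" for i
      by (simp add: real_sqrt_mult[symmetric] powr_add[symmetric] Lblk_def)
    then show ?thesis by (simp add: mult.assoc)
  qed
  also have "\<dots> \<le> sqrt (\<Sum>i<M. (sqrt (?L i powr \<alpha>))\<^sup>2)
      * sqrt (\<Sum>i<M. (sqrt (?L i powr (1 - \<alpha>)) * norm (blockvec w blk i))\<^sup>2)"
    by (rule sum_mult_le_sqrt_sum_squares)
  also have "\<dots> = sqrt (\<Sum>i<M. ?L i powr \<alpha>) * bnorm A blk M (1 - \<alpha>) w"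
    unfolding bnorm_eq by (simp add: power_mult_distrib)
  finally show ?thesis .
qed

lemma transpose_mult_vec_bounded_below:
  fixes B :: "real^'n^'m"
  obtains e where "0 < e" and "\<And>v. v \<in> span (range ((*v) B)) \<Longrightarrow> e * norm v \<le> norm (transpose B *v v)"
proof -
  have "\<exists>e>0. \<forall>v\<in>span (range ((*v) B)). e * norm v \<le> norm (transpose B *v v)"
  proof (rule injective_imp_isometric)
    show "\<forall>v\<in>span (range ((*v) B)). transpose B *v v = 0 \<longrightarrow> v = 0"
    proof (intro ballI impI)
      fix v assume v: "v \<in> span (range ((*v) B))" and "transpose B *v v = 0"
      then have "orthogonal v u" if "u \<in> range ((*v) B)" for u
        using that inner_transpose_mult_vec[of B v] by (auto simp: orthogonal_def)
      then have "orthogonal v v" using orthogonal_to_span[OF v] by blast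
      then show "v = 0" by (simp add: orthogonal_def)
    qed
  qed (auto intro: closed_subspace)
  then show ?thesis using that by blast
qed

lemma range_kernel_decomp:
  fixes B :: "real^'n^'m"
  obtains u z where "u \<in> span (range ((*v) B))" and "transpose B *v z = 0" and "v = u + z"
proof -
  obtain u z where u: "u \<in> span (range ((*v) B))"
    and z: "\<And>w. w \<in> span (range ((*v) B)) \<Longrightarrow> orthogonal z w" and "v = u + z"
    using orthogonal_subspace_decomp_exists[of "range ((*v) B)" v] by blast
  have "z \<bullet> (B *v x) = 0" for x
    using z[of "B *v x"] by (auto simp: orthogonal_def intro: span_base)
  then have "transpose B *v z = 0"
    using inner_transpose_mult_vec[of B z "transpose B *v z"] by simp
  then show ?thesis using that u \<open>v = u + z\<close> by blast
qed

section \<open>The dual function along the iteration\<close>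

locale block_kaczmarz =
  fixes A :: "real^'n^'m" and b :: "real^'m" and f :: "real^'n \<Rightarrow> real"
    and blk :: "'m \<Rightarrow> nat" and M :: nat and \<alpha> :: real and xhat :: "real^'n"
  assumes rows_nonzero: "\<forall>r. A $ r \<noteq> 0"
    and f_sc: "strongly_convex1 f"
    and blk_range: "\<forall>r. blk r < M"
    and blk_nonempty: "\<forall>i<M. \<exists>r. blk r = i"
    and xhat_feas: "A *v xhat = b"
    and xhat_min: "\<forall>x. A *v x = b \<longrightarrow> f xhat \<le> f x"
    and dual_sol: "Ystar A b f \<noteq> {}"
begin

abbreviation L :: "nat \<Rightarrow> real" where "L i \<equiv> Lblk A blk i"
abbreviation \<Psi> :: "real^'m \<Rightarrow> real" where "\<Psi> y \<equiv> Psi A b f y"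

definition primal :: "real^'m \<Rightarrow> real^'n" where
  "primal y = grad (fconj f) (transpose A *v y)"

definition residual :: "real^'m \<Rightarrow> real^'m" where
  "residual y = A *v primal y - b"

definition dual_step :: "real^'m \<Rightarrow> nat \<Rightarrow> real^'m" where
  "dual_step y i = y - (1 / L i) *\<^sub>R blockvec (residual y) blk i"

definition dual_iter :: "nat list \<Rightarrow> real^'m" where
  "dual_iter is = foldl dual_step 0 is"

lemma M_pos: "0 < M"
  using blk_range by (metis gr_zeroI not_less0)

lemma Lblk_pos:
  assumes "i < M"
  shows "0 < L i"
proof -
  obtain r where r: "blk r = i" using blk_nonempty assms by blast
  have "(blockmat A blk i *v (A $ r)) $ r = A $ r \<bullet> A $ r"
    by (simp add: blockmat_def matrix_vector_mult_def r inner_vec_def)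
  then have "blockmat A blk i *v (A $ r) \<noteq> 0"
    using rows_nonzero by (metis inner_eq_zero_iff zero_index)
  then have "0 < norm (blockmat A blk i *v (A $ r))" by simp
  also have "\<dots> \<le> spec_norm (blockmat A blk i) * norm (A $ r)"
    by (rule norm_mult_vec_le_spec_norm)
  finally show ?thesis
    using spec_norm_nonneg by (simp add: Lblk_def zero_less_mult_iff)
qed

lemma bk_step_transpose:
  "bk_step A b blk f (transpose A *v y) i = transpose A *v dual_step y i"
  unfolding bk_step_def dual_step_def residual_def primal_def blockmat_mult_vec
    transpose_blockmat_mult_vec
  by (simp add: blockvec_diff[symmetric] blockvec_scaleR matrix_vector_mult_diff_distrib
      matrix_vector_mult_scaleR)

lemma bk_d_eq: "bk_d A b blk f is = transpose A *v dual_iter is"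
proof -
  have "foldl (bk_step A b blk f) (transpose A *v y) is = transpose A *v foldl dual_step y is" for y
    by (induction "is" arbitrary: y) (simp_all add: bk_step_transpose)
  from this[of 0] show ?thesis by (simp add: bk_d_def dual_iter_def)
qed

lemma primal_is_fconj_argmax: "is_fconj_argmax f (transpose A *v y) (primal y)"
  unfolding primal_def by (rule grad_fconj_is_argmax[OF f_sc])

lemma Psi_eq: "\<Psi> y = y \<bullet> residual y - f (primal y)"
  using fconj_eq_argmax[OF primal_is_fconj_argmax, of y]
  by (simp add: Psi_def residual_def inner_transpose_mult_vec inner_diff_right inner_commute)

lemma Psi_dual_step_le:
  assumes "i < M"
  shows "\<Psi> (dual_step y i) \<le> \<Psi> y - (norm (blockvec (residual y) blk i))\<^sup>2 / (2 * L i)"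
proof -
  define z where "z = transpose A *v y"
  define w where "w = blockvec (residual y) blk i"
  define c where "c = 1 / L i"
  have L0: "0 < L i" by (rule Lblk_pos[OF assms])
  have "norm (transpose A *v w) \<le> sqrt (L i) * norm w"
    using norm_transpose_mult_blockvec_le[of A "residual y" blk i] by (simp add: w_def)
  then have "(norm (transpose A *v w))\<^sup>2 \<le> (sqrt (L i) * norm w)\<^sup>2"
    by (intro power_mono) auto
  then have norm_step: "(norm (c *\<^sub>R (transpose A *v w)))\<^sup>2 \<le> c\<^sup>2 * (L i * (norm w)\<^sup>2)"
    using L0 by (simp add: power_mult_distrib mult_left_mono)
  have "w \<bullet> (A *v primal y) - w \<bullet> b = (norm w)\<^sup>2"
    using inner_blockvec_blockvec[of "residual y" blk i "residual y"]
    by (simp add: w_def residual_def inner_diff_right power2_norm_eq_inner)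
  then have lin: "(c *\<^sub>R (transpose A *v w)) \<bullet> primal y = c * (b \<bullet> w) + c * (norm w)\<^sup>2"
    by (simp add: inner_transpose_mult_vec inner_commute algebra_simps)
  \<comment> \<open>The descent lemma for f*, whose gradient is 1-Lipschitz.\<close>
  have "fconj f (z - c *\<^sub>R (transpose A *v w))
      \<le> fconj f z - (c *\<^sub>R (transpose A *v w)) \<bullet> primal y + (norm (c *\<^sub>R (transpose A *v w)))\<^sup>2 / 2"
    using fconj_le_quadratic[OF f_sc primal_is_fconj_argmax[of y], of "z - c *\<^sub>R (transpose A *v w)"]
    by (simp add: z_def)
  moreover have "\<Psi> (dual_step y i) = fconj f (z - c *\<^sub>R (transpose A *v w)) - b \<bullet> y + c * (b \<bullet> w)"
    by (simp add: Psi_def dual_step_def z_def w_def c_def matrix_vector_mult_diff_distrib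
        matrix_vector_mult_scaleR inner_diff_right)
  moreover have "\<Psi> y = fconj f z - b \<bullet> y"
    by (simp add: Psi_def z_def)
  moreover have "c * (norm w)\<^sup>2 - c\<^sup>2 * (L i * (norm w)\<^sup>2) / 2 = (norm w)\<^sup>2 / (2 * L i)"
    using L0 by (simp add: c_def power2_eq_square field_simps)
  ultimately show ?thesis
    using lin norm_step unfolding w_def[symmetric] by linarith
qed

lemma Psi_dual_step_le_Psi: "i < M \<Longrightarrow> \<Psi> (dual_step y i) \<le> \<Psi> y"
  using Psi_dual_step_le[of i y] Lblk_pos[of i] by (smt (verit) divide_nonneg_pos zero_le_power2)

lemma inner_transpose_xhat: "(transpose A *v y) \<bullet> xhat = b \<bullet> y"
  using inner_transpose_mult_vec[of A y xhat] by (simp add: xhat_feas inner_commute)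

lemma Psi_plus_f_nonneg: "0 \<le> \<Psi> y + f xhat"
  using fenchel_young[OF f_sc, of "transpose A *v y" xhat]
  by (simp add: Psi_def inner_transpose_xhat)

lemma residual_Ystar:
  assumes "yh \<in> Ystar A b f"
  shows "residual yh = 0"
proof -
  have "blockvec (residual yh) blk i = 0" if "i < M" for i
  proof -
    have "\<Psi> yh \<le> \<Psi> (dual_step yh i)" using assms by (simp add: Ystar_def)
    with Psi_dual_step_le[OF that, of yh]
    have "(norm (blockvec (residual yh) blk i))\<^sup>2 / (2 * L i) \<le> 0"
      by linarith
    then have "(norm (blockvec (residual yh) blk i))\<^sup>2 \<le> 0"
      using Lblk_pos[OF that] by (simp add: divide_le_0_iff)
    then show ?thesis by simp
  qed
  then show ?thesis using sum_blockvec[OF blk_range, of "residual yh"] by simp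
qed

lemma Psi_Ystar:
  assumes "yh \<in> Ystar A b f"
  shows "\<Psi> yh = - f xhat"
proof -
  have "A *v primal yh = b" using residual_Ystar[OF assms] by (simp add: residual_def)
  then have "f xhat \<le> f (primal yh)" using xhat_min by blast
  then show ?thesis
    using Psi_eq[of yh] residual_Ystar[OF assms] Psi_plus_f_nonneg[of yh] by simp
qed

lemma Psi_gap_le_inner_residual:
  assumes "yh \<in> Ystar A b f"
  shows "\<Psi> y + f xhat \<le> residual y \<bullet> (y - yh)"
proof -
  have "fconj f (transpose A *v y) + (transpose A *v yh - transpose A *v y) \<bullet> primal y
      \<le> fconj f (transpose A *v yh)"
    by (rule fconj_ge_linearization[OF f_sc primal_is_fconj_argmax])
  then have "\<Psi> y + (yh - y) \<bullet> residual y \<le> \<Psi> yh"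
    by (simp add: Psi_def residual_def inner_transpose_mult_vec matrix_vector_mult_diff_distrib
        inner_diff_left inner_diff_right inner_commute)
  then show ?thesis
    using Psi_Ystar[OF assms] by (simp add: inner_diff_left inner_diff_right inner_commute)
qed

lemma bregman_primal: "bregman f (transpose A *v y) (primal y) xhat = \<Psi> y + f xhat"
  using fconj_eq_argmax[OF primal_is_fconj_argmax, of y]
  by (simp add: bregman_def Psi_def inner_diff_right inner_transpose_xhat)

definition dist_Ystar :: "real^'m \<Rightarrow> real" where
  "dist_Ystar y = (INF yh\<in>Ystar A b f. bnorm A blk M (1 - \<alpha>) (y - yh))"

abbreviation R :: real where "R \<equiv> Rbeta A b f blk M (1 - \<alpha>) 0"

lemma dist_Ystar_le: "yh \<in> Ystar A b f \<Longrightarrow> dist_Ystar y \<le> bnorm A blk M (1 - \<alpha>) (y - yh)"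
  unfolding dist_Ystar_def by (rule cINF_lower) (auto intro: bdd_belowI[of _ 0] simp: bnorm_nonneg)

lemma norm_transpose_le_Psi:
  obtains C where "\<And>y. norm (transpose A *v y) \<le> \<Psi> y + C"
proof -
  obtain K where K: "\<And>x. x \<in> cball xhat 1 \<Longrightarrow> \<bar>f x\<bar> \<le> K"
    using strongly_convex1_bounded_cball[OF f_sc] by blast
  have "norm (transpose A *v y) \<le> \<Psi> y + K" for y
  proof (cases "transpose A *v y = 0")
    case True
    then show ?thesis using Psi_plus_f_nonneg[of y] K[of xhat] by simp
  next
    case False
    define w where "w = transpose A *v y"
    define s where "s = (1 / norm w) *\<^sub>R w"
    \<comment> \<open>Fenchel--Young at the point of the unit sphere around xhat in the direction of w.\<close>
    have "w \<bullet> (xhat + s) - f (xhat + s) \<le> fconj f w"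
      by (rule fenchel_young[OF f_sc])
    moreover have "w \<bullet> (xhat + s) = b \<bullet> y + norm w"
      using False by (simp add: w_def s_def inner_add_right inner_transpose_xhat
          power2_norm_eq_inner[symmetric] power2_eq_square)
    moreover have "f (xhat + s) \<le> K"
      using K[of "xhat + s"] False by (simp add: s_def w_def dist_norm)
    ultimately show ?thesis by (simp add: Psi_def w_def)
  qed
  then show ?thesis by (rule that)
qed

lemma Ystar_add_kernel:
  assumes "yh \<in> Ystar A b f" and "transpose A *v z = 0"
  shows "yh + z \<in> Ystar A b f"
proof -
  have "b \<bullet> z = 0"
    using inner_transpose_xhat[of z] assms(2) by (simp add: inner_commute)
  then have "\<Psi> (yh + z) = \<Psi> yh"
    using assms(2) by (simp add: Psi_def matrix_vector_right_distrib inner_add_right)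
  then show ?thesis using assms(1) by (simp add: Ystar_def)
qed

lemma dist_Ystar_bdd_above: "bdd_above (dist_Ystar ` {y. \<Psi> y \<le> \<Psi> 0})"
proof -
  obtain yh0 where yh0: "yh0 \<in> Ystar A b f" using dual_sol by blast
  obtain C where C: "\<And>y. norm (transpose A *v y) \<le> \<Psi> y + C"
    using norm_transpose_le_Psi by blast
  obtain e where e: "0 < e" "\<And>v. v \<in> span (range ((*v) A)) \<Longrightarrow> e * norm v \<le> norm (transpose A *v v)"
    using transpose_mult_vec_bounded_below[of A] by blast
  define D where "D = sqrt (\<Sum>i<M. L i powr (1 - \<alpha>)) * ((\<Psi> 0 + C + norm (transpose A *v yh0)) / e)"
  have "dist_Ystar y \<le> D" if y: "\<Psi> y \<le> \<Psi> 0" for y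
  proof -
    \<comment> \<open>Moving yh0 along the kernel of A^T leaves only the component of y - yh0 in the range of A.\<close>
    obtain u z where u: "u \<in> span (range ((*v) A))" and z: "transpose A *v z = 0"
      and uz: "y - yh0 = u + z"
      by (rule range_kernel_decomp)
    have "e * norm u \<le> norm (transpose A *v y - transpose A *v yh0)"
      using e(2)[OF u] z uz
      by (metis add.right_neutral matrix_vector_mult_diff_distrib matrix_vector_right_distrib)
    also have "\<dots> \<le> \<Psi> 0 + C + norm (transpose A *v yh0)"
      using norm_triangle_ineq4[of "transpose A *v y" "transpose A *v yh0"] C[of y] y by linarith
    finally have "norm u \<le> (\<Psi> 0 + C + norm (transpose A *v yh0)) / e"
      using e(1) by (simp add: field_simps)
    have "dist_Ystar y \<le> bnorm A blk M (1 - \<alpha>) u"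
      using dist_Ystar_le[OF Ystar_add_kernel[OF yh0 z], of y] uz by (simp add: algebra_simps)
    also have "\<dots> \<le> sqrt (\<Sum>i<M. L i powr (1 - \<alpha>)) * norm u"
      by (rule bnorm_le_norm)
    also have "\<dots> \<le> D"
      unfolding D_def using \<open>norm u \<le> _\<close> by (intro mult_left_mono real_sqrt_ge_zero sum_nonneg) auto
    finally show ?thesis .
  qed
  then show ?thesis by (intro bdd_aboveI[of _ D]) auto
qed

lemma dist_Ystar_le_R: "\<Psi> y \<le> \<Psi> 0 \<Longrightarrow> dist_Ystar y \<le> R"
  unfolding Rbeta_def dist_Ystar_def[symmetric]
  by (rule cSUP_upper) (use dist_Ystar_bdd_above in auto)

abbreviation S :: real where "S \<equiv> \<Sum>j<M. L j powr \<alpha>"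
abbreviation prob :: "nat \<Rightarrow> real" where "prob i \<equiv> prob_blk A blk M \<alpha> i"

lemma S_pos: "0 < S"
proof -
  have "0 < L 0 powr \<alpha>" using Lblk_pos[OF M_pos] by simp
  also have "\<dots> \<le> S" using M_pos by (intro member_le_sum) auto
  finally show ?thesis .
qed

lemma prob_nonneg: "0 \<le> prob i"
  unfolding prob_blk_def by (intro divide_nonneg_nonneg sum_nonneg) auto

lemma sum_prob: "(\<Sum>i<M. prob i) = 1"
  using S_pos by (simp add: prob_blk_def sum_divide_distrib[symmetric])

definition resid_norm :: "real^'m \<Rightarrow> real" where
  "resid_norm y = sqrt (\<Sum>i<M. L i powr (\<alpha> - 1) * (norm (blockvec (residual y) blk i))\<^sup>2)"

lemma Psi_gap_le_resid_norm_bnorm: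
  assumes "yh \<in> Ystar A b f"
  shows "\<Psi> y + f xhat \<le> resid_norm y * bnorm A blk M (1 - \<alpha>) (y - yh)"
proof -
  let ?r = "\<lambda>i. blockvec (residual y) blk i" and ?w = "\<lambda>i. blockvec (y - yh) blk i"
  have "\<Psi> y + f xhat \<le> residual y \<bullet> (y - yh)"
    by (rule Psi_gap_le_inner_residual[OF assms])
  also have "\<dots> = (\<Sum>i<M. ?r i \<bullet> ?w i)"
    by (rule inner_eq_sum_blockvec[OF blk_range])
  also have "\<dots> \<le> (\<Sum>i<M. norm (?r i) * norm (?w i))"
    by (intro sum_mono norm_cauchy_schwarz)
  also have "\<dots> = (\<Sum>i<M. (sqrt (L i powr (\<alpha> - 1)) * norm (?r i)) * (sqrt (L i powr (1 - \<alpha>)) * norm (?w i)))"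
  proof (rule sum.cong[OF refl])
    fix i assume "i \<in> {..<M}"
    then have "0 < L i" using Lblk_pos by simp
    then have "sqrt (L i powr (\<alpha> - 1)) * sqrt (L i powr (1 - \<alpha>)) = 1"
      by (simp add: real_sqrt_mult[symmetric] powr_add[symmetric])
    then show "norm (?r i) * norm (?w i)
        = (sqrt (L i powr (\<alpha> - 1)) * norm (?r i)) * (sqrt (L i powr (1 - \<alpha>)) * norm (?w i))"
      by (simp only: mult_ac) simp
  qed
  also have "\<dots> \<le> sqrt (\<Sum>i<M. (sqrt (L i powr (\<alpha> - 1)) * norm (?r i))\<^sup>2)
      * sqrt (\<Sum>i<M. (sqrt (L i powr (1 - \<alpha>)) * norm (?w i))\<^sup>2)"
    by (rule sum_mult_le_sqrt_sum_squares)
  also have "\<dots> = resid_norm y * bnorm A blk M (1 - \<alpha>) (y - yh)"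
    unfolding resid_norm_def bnorm_eq by (simp add: power_mult_distrib)
  finally show ?thesis .
qed

lemma Psi_gap_le_resid_norm_R:
  assumes "\<Psi> y \<le> \<Psi> 0"
  shows "\<Psi> y + f xhat \<le> resid_norm y * R"
proof (cases "resid_norm y = 0")
  case True
  obtain yh where "yh \<in> Ystar A b f" using dual_sol by blast
  then show ?thesis using Psi_gap_le_resid_norm_bnorm[of yh y] True by simp
next
  case False
  moreover have "0 \<le> resid_norm y"
    unfolding resid_norm_def by (intro real_sqrt_ge_zero sum_nonneg mult_nonneg_nonneg) auto
  ultimately have G: "0 < resid_norm y" by linarith
  have "(\<Psi> y + f xhat) / resid_norm y \<le> dist_Ystar y"
    unfolding dist_Ystar_def using dual_sol
  proof (intro cINF_greatest)
    fix yh assume "yh \<in> Ystar A b f"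
    then show "(\<Psi> y + f xhat) / resid_norm y \<le> bnorm A blk M (1 - \<alpha>) (y - yh)"
      using Psi_gap_le_resid_norm_bnorm[of yh y] G by (simp add: divide_le_eq mult.commute)
  qed auto
  also have "\<dots> \<le> R" by (rule dist_Ystar_le_R[OF assms])
  finally show ?thesis using G by (simp add: divide_le_eq mult.commute)
qed

lemma expected_Psi_dual_step_le:
  "(\<Sum>i<M. prob i * \<Psi> (dual_step y i)) \<le> \<Psi> y - (resid_norm y)\<^sup>2 / (2 * S)"
proof -
  let ?r = "\<lambda>i. (norm (blockvec (residual y) blk i))\<^sup>2"
  have weight: "prob i * (?r i / (2 * L i)) = L i powr (\<alpha> - 1) * ?r i / (2 * S)" if "i < M" for i
  proof -
    have "L i powr (\<alpha> - 1) = L i powr \<alpha> / L i" using Lblk_pos[OF that] by (simp add: powr_diff)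
    then show ?thesis using Lblk_pos[OF that] S_pos by (simp add: prob_blk_def field_simps)
  qed
  have "(\<Sum>i<M. prob i * \<Psi> (dual_step y i)) \<le> (\<Sum>i<M. prob i * (\<Psi> y - ?r i / (2 * L i)))"
    by (intro sum_mono mult_left_mono Psi_dual_step_le prob_nonneg) auto
  also have "\<dots> = (\<Sum>i<M. prob i) * \<Psi> y - (\<Sum>i<M. L i powr (\<alpha> - 1) * ?r i) / (2 * S)"
    using weight by (simp add: right_diff_distrib sum_subtractf sum_distrib_right sum_divide_distrib)
  also have "\<dots> = \<Psi> y - (resid_norm y)\<^sup>2 / (2 * S)"
    unfolding sum_prob resid_norm_def by (subst real_sqrt_pow2) (auto intro!: sum_nonneg)
  finally show ?thesis .
qed

lemma Psi_gap_sq_le_expected_decrease: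
  assumes "\<Psi> y \<le> \<Psi> 0"
  shows "(\<Psi> y + f xhat)\<^sup>2
    \<le> 2 * S * R\<^sup>2 * ((\<Psi> y + f xhat) - (\<Sum>i<M. prob i * (\<Psi> (dual_step y i) + f xhat)))"
    (is "_ \<le> _ * ?decrease")
proof -
  have "(\<Sum>i<M. prob i * (\<Psi> (dual_step y i) + f xhat)) = (\<Sum>i<M. prob i * \<Psi> (dual_step y i)) + f xhat"
    using sum_prob by (simp add: distrib_left sum.distrib sum_distrib_right[symmetric])
  then have decrease: "(resid_norm y)\<^sup>2 \<le> 2 * S * ?decrease"
    using expected_Psi_dual_step_le[of y] S_pos by (simp add: field_simps)
  have "(\<Psi> y + f xhat)\<^sup>2 \<le> (resid_norm y * R)\<^sup>2"
    using Psi_gap_le_resid_norm_R[OF assms] Psi_plus_f_nonneg[of y] by (intro power_mono) auto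
  also have "\<dots> = R\<^sup>2 * (resid_norm y)\<^sup>2"
    by (simp add: power_mult_distrib)
  also have "\<dots> \<le> R\<^sup>2 * (2 * S * ?decrease)"
    using decrease by (intro mult_left_mono) auto
  finally show ?thesis by (simp only: mult_ac)
qed

lemma Psi_gap_0_le: "\<Psi> 0 + f xhat \<le> S * R\<^sup>2 / 2"
proof -
  have "sqrt (2 * (\<Psi> 0 + f xhat) / S) \<le> bnorm A blk M (1 - \<alpha>) (0 - yh)"
    if yh: "yh \<in> Ystar A b f" for yh
  proof -
    define z where "z = transpose A *v yh"
    have "A *v primal yh = b" using residual_Ystar[OF yh] by (simp add: residual_def)
    then have "z \<bullet> primal yh = b \<bullet> yh"
      by (simp add: z_def inner_transpose_mult_vec inner_commute)
    then have "\<Psi> 0 \<le> \<Psi> yh + (norm z)\<^sup>2 / 2"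
      using fconj_le_quadratic[OF f_sc primal_is_fconj_argmax[of yh], of 0]
      by (simp add: Psi_def z_def)
    also have "transpose A *v (0 - yh) = - z"
      by (simp only: matrix_vector_mult_diff_distrib matrix_vector_mult_0_right z_def) simp
    then have "norm z \<le> sqrt S * bnorm A blk M (1 - \<alpha>) (0 - yh)"
      using norm_transpose_mult_le_bnorm[OF blk_range, of A "0 - yh" \<alpha>] by simp
    then have "(norm z)\<^sup>2 \<le> (sqrt S * bnorm A blk M (1 - \<alpha>) (0 - yh))\<^sup>2"
      by (intro power_mono) auto
    finally have "2 * (\<Psi> 0 + f xhat) / S \<le> (bnorm A blk M (1 - \<alpha>) (0 - yh))\<^sup>2"
      using Psi_Ystar[OF yh] S_pos by (simp add: power_mult_distrib field_simps)
    then show ?thesis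
      using real_sqrt_le_mono bnorm_nonneg by (metis real_sqrt_abs abs_of_nonneg)
  qed
  then have "sqrt (2 * (\<Psi> 0 + f xhat) / S) \<le> dist_Ystar 0"
    unfolding dist_Ystar_def using dual_sol by (intro cINF_greatest) auto
  also have "\<dots> \<le> R" by (rule dist_Ystar_le_R) simp
  finally have "sqrt (2 * (\<Psi> 0 + f xhat) / S) \<le> R" .
  moreover have "0 \<le> 2 * (\<Psi> 0 + f xhat) / S"
    using Psi_plus_f_nonneg[of 0] S_pos by simp
  ultimately have "(sqrt (2 * (\<Psi> 0 + f xhat) / S))\<^sup>2 \<le> R\<^sup>2"
    by (intro power_mono) auto
  then have "2 * (\<Psi> 0 + f xhat) / S \<le> R\<^sup>2"
    using \<open>0 \<le> 2 * (\<Psi> 0 + f xhat) / S\<close> by simp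
  then have "2 * (\<Psi> 0 + f xhat) \<le> R\<^sup>2 * S"
    using S_pos by (simp add: pos_divide_le_eq)
  then show ?thesis by (simp add: mult.commute)
qed

abbreviation expect :: "nat \<Rightarrow> (nat list \<Rightarrow> real) \<Rightarrow> real" where
  "expect k g \<equiv> expect_k A blk M \<alpha> k g"

abbreviation index_seqs :: "nat \<Rightarrow> nat list set" where
  "index_seqs k \<equiv> {is. length is = k \<and> set is \<subseteq> {..<M}}"

lemma index_seqs_Suc: "index_seqs (Suc k) = (\<lambda>(is, i). is @ [i]) ` (index_seqs k \<times> {..<M})"
proof (rule set_eqI, rule iffI)
  fix xs assume xs: "xs \<in> index_seqs (Suc k)"
  then have "xs \<noteq> []" by auto
  then obtain ys y where "xs = ys @ [y]" by (metis rev_exhaust)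
  with xs show "xs \<in> (\<lambda>(is, i). is @ [i]) ` (index_seqs k \<times> {..<M})"
    by (auto intro!: image_eqI[of _ _ "(ys, y)"])
qed auto

lemma expect_Suc: "expect (Suc k) g = expect k (\<lambda>is. \<Sum>i<M. prob i * g (is @ [i]))"
proof -
  have "inj_on (\<lambda>(is, i). is @ [i]) (index_seqs k \<times> {..<M})"
    by (auto simp: inj_on_def)
  then have "expect (Suc k) g
      = (\<Sum>(is, i)\<in>index_seqs k \<times> {..<M}. prod_list (map prob (is @ [i])) * g (is @ [i]))"
    unfolding expect_k_def index_seqs_Suc by (subst sum.reindex) (auto simp: case_prod_beta)
  also have "\<dots> = (\<Sum>is\<in>index_seqs k. prod_list (map prob is) * (\<Sum>i<M. prob i * g (is @ [i])))"
    by (subst sum.cartesian_product[symmetric]) (simp add: sum_distrib_left mult.assoc)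
  finally show ?thesis unfolding expect_k_def .
qed

lemma expect_0: "expect 0 g = g []"
proof -
  have "index_seqs 0 = {[]}" by auto
  then show ?thesis unfolding expect_k_def by simp
qed

lemma expect_const: "expect k (\<lambda>_. c) = c"
proof (induction k)
  case 0
  then show ?case by (simp add: expect_0)
next
  case (Suc k)
  then show ?case by (simp add: expect_Suc sum_prob sum_distrib_right[symmetric])
qed

lemma expect_mono:
  "(\<And>is. is \<in> index_seqs k \<Longrightarrow> g is \<le> h is) \<Longrightarrow> expect k g \<le> expect k h"
  unfolding expect_k_def
  by (intro sum_mono mult_left_mono prod_list_nonneg) (auto simp: prob_nonneg)

lemma expect_scale: "expect k (\<lambda>is. c * g is) = c * expect k g"
  unfolding expect_k_def by (simp add: sum_distrib_left mult_ac)

lemma expect_diff: "expect k (\<lambda>is. g is - h is) = expect k g - expect k h"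
  unfolding expect_k_def by (simp add: sum_subtractf right_diff_distrib)

lemma expect_sq_le: "(expect k g)\<^sup>2 \<le> expect k (\<lambda>is. (g is)\<^sup>2)"
  unfolding expect_k_def
proof (rule weighted_mean_sq_le)
  show "(\<Sum>is\<in>index_seqs k. prod_list (map prob is)) = 1"
    using expect_const[of k 1] by (simp add: expect_k_def)
qed (auto intro!: prod_list_nonneg simp: prob_nonneg)

lemma dual_iter_snoc: "dual_iter (is @ [i]) = dual_step (dual_iter is) i"
  by (simp add: dual_iter_def)

lemma Psi_dual_iter_le: "set is \<subseteq> {..<M} \<Longrightarrow> \<Psi> (dual_iter is) \<le> \<Psi> 0"
proof (induction "is" rule: rev_induct)
  case Nil
  then show ?case by (simp add: dual_iter_def)
next
  case (snoc i "is")
  then show ?case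
    using Psi_dual_step_le_Psi[of i "dual_iter is"] by (simp add: dual_iter_snoc)
qed

definition expected_gap :: "nat \<Rightarrow> real" where
  "expected_gap k = expect k (\<lambda>is. \<Psi> (dual_iter is) + f xhat)"

lemma expected_gap_Suc:
  "expected_gap (Suc k) = expect k (\<lambda>is. \<Sum>i<M. prob i * (\<Psi> (dual_step (dual_iter is) i) + f xhat))"
  unfolding expected_gap_def expect_Suc dual_iter_snoc ..

lemma expected_gap_nonneg: "0 \<le> expected_gap k"
  using expect_mono[of k "\<lambda>_. 0" "\<lambda>is. \<Psi> (dual_iter is) + f xhat"] Psi_plus_f_nonneg
  by (simp add: expected_gap_def expect_const)

lemma expected_gap_sq_le:
  "(expected_gap k)\<^sup>2 \<le> 2 * S * R\<^sup>2 * (expected_gap k - expected_gap (Suc k))"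
proof -
  have "(expected_gap k)\<^sup>2 \<le> expect k (\<lambda>is. (\<Psi> (dual_iter is) + f xhat)\<^sup>2)"
    unfolding expected_gap_def by (rule expect_sq_le)
  also have "\<dots> \<le> expect k (\<lambda>is. 2 * S * R\<^sup>2 * ((\<Psi> (dual_iter is) + f xhat)
      - (\<Sum>i<M. prob i * (\<Psi> (dual_step (dual_iter is) i) + f xhat))))"
  proof (rule expect_mono)
    fix "is" assume "is \<in> index_seqs k"
    then have "\<Psi> (dual_iter is) \<le> \<Psi> 0" by (intro Psi_dual_iter_le) auto
    then show "(\<Psi> (dual_iter is) + f xhat)\<^sup>2 \<le> 2 * S * R\<^sup>2 * ((\<Psi> (dual_iter is) + f xhat)
        - (\<Sum>i<M. prob i * (\<Psi> (dual_step (dual_iter is) i) + f xhat)))"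
      by (rule Psi_gap_sq_le_expected_decrease)
  qed
  also have "\<dots> = 2 * S * R\<^sup>2 * (expected_gap k - expected_gap (Suc k))"
    unfolding expect_scale expect_diff expected_gap_Suc expected_gap_def[of k] ..
  finally show ?thesis .
qed

lemma expected_gap_le: "expected_gap k \<le> 2 * S * R\<^sup>2 / (real k + 4)"
proof (rule rate_of_quadratic_decrease)
  show "0 \<le> 2 * S * R\<^sup>2" using S_pos by simp
  have "expected_gap 0 = \<Psi> 0 + f xhat"
    unfolding expected_gap_def expect_0 dual_iter_def by simp
  then show "expected_gap 0 \<le> 2 * S * R\<^sup>2 / 4"
    using Psi_gap_0_le by simp
qed (rule expected_gap_nonneg, rule expected_gap_sq_le)

lemma bregman_bk_eq:
  "bregman f (bk_d A b blk f is) (bk_x A b blk f is) xhat = \<Psi> (dual_iter is) + f xhat"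
  unfolding bk_x_def bk_d_eq primal_def[symmetric] by (rule bregman_primal)

lemma expected_half_sq_dist_le_bregman:
  "1/2 * expect k (\<lambda>is. (norm (bk_x A b blk f is - xhat))\<^sup>2)
    \<le> expect k (\<lambda>is. bregman f (bk_d A b blk f is) (bk_x A b blk f is) xhat)"
  unfolding expect_scale[symmetric] bk_x_def
  by (intro expect_mono) (use bregman_grad_fconj_ge_half_sq[OF f_sc] in simp)

lemma expected_bregman_le:
  "expect k (\<lambda>is. bregman f (bk_d A b blk f is) (bk_x A b blk f is) xhat)
    \<le> 2 * real M * Lbar A blk M \<alpha> / (real k + 4) * R\<^sup>2"
proof -
  have M_Lbar: "real M * Lbar A blk M \<alpha> = S"
    using M_pos by (simp add: Lbar_def)
  have "expect k (\<lambda>is. bregman f (bk_d A b blk f is) (bk_x A b blk f is) xhat) = expected_gap k"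
    unfolding bregman_bk_eq expected_gap_def ..
  also have "\<dots> \<le> 2 * S * R\<^sup>2 / (real k + 4)"
    by (rule expected_gap_le)
  also have "\<dots> = 2 * real M * Lbar A blk M \<alpha> / (real k + 4) * R\<^sup>2"
    unfolding M_Lbar[symmetric] by simp
  finally show ?thesis .
qed

end

theorem theorem1:
  fixes A :: "real^'n^'m" and b :: "real^'m" and f :: "real^'n \<Rightarrow> real"
    and blk :: "'m \<Rightarrow> nat" and M :: nat and \<alpha> :: real and xhat :: "real^'n"
  assumes rows_nonzero: "\<forall>r. A $ r \<noteq> 0"
    and b_range: "b \<in> range (\<lambda>x. A *v x)"
    and f_sc: "strongly_convex1 f"
    and blk_range: "\<forall>r. blk r < M"
    and blk_nonempty: "\<forall>i<M. \<exists>r. blk r = i"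
    and alpha: "0 \<le> \<alpha>" "\<alpha> \<le> 1"
    and xhat_feas: "A *v xhat = b"
    and xhat_min: "\<forall>x. A *v x = b \<longrightarrow> f xhat \<le> f x"
    and dual_sol: "Ystar A b f \<noteq> {}"
  shows "\<forall>k::nat.
     1/2 * expect_k A blk M \<alpha> k (\<lambda>is. (norm (bk_x A b blk f is - xhat))\<^sup>2)
       \<le> expect_k A blk M \<alpha> k (\<lambda>is. bregman f (bk_d A b blk f is) (bk_x A b blk f is) xhat)
   \<and> expect_k A blk M \<alpha> k (\<lambda>is. bregman f (bk_d A b blk f is) (bk_x A b blk f is) xhat)
       \<le> 2 * real M * Lbar A blk M \<alpha> / (real k + 4) * (Rbeta A b f blk M (1 - \<alpha>) 0)\<^sup>2"
proof -
  interpret block_kaczmarz A b f blk M \<alpha> xhat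
    using assms by unfold_locales auto
  show ?thesis
    using expected_half_sq_dist_le_bregman expected_bregman_le by blast
qed

end
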